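(* There exist two phylogenetic networks $N_1$ and $N_2$ of class I on the label set $S=\{1,2,3,4,5\}$ (in the sense defined in the context) such that $N_1\not\cong N_2$ but $\theta_{AB}(N_1)=\theta_{AB}(N_2)$.
   Context: A DAG $N=(V,E)$ is labeled in a finite set $S$ if its leaves (nodes of out-degree 0) are bijectively labeled by $S$; leaves are identified with their labels. A node is a tree node if its in-degree is at most 1 and a hybrid node if its in-degree is greater than 1; the root is the node of in-degree 0. Two DAGs labeled in $S$ are isomorphic ($\cong$) if there is an isomorphism of directed graphs preserving leaf labels. A path $u\rightsquigarrow v$ is a sequence of nodes $u=v_0,\dots,v_k=v$ with $(v_{i-1},v_i)\in E$. For a node $u$: $C(u)$ is the set of leaves that are descendants of $u$; $A(u)\subseteq C(u)$ is the set of leaves $s$ such that every path from a root to $s$ contains $u$; $B(u)=C(u)\setminus A(u)$. For an arc $e=(u,v)$, its $AB$-weighted tripartition $\theta_{AB}(e)$ is the triple $(A(v),B(v),S\setminus C(v))$ in which every leaf $s\in A(v)\cup B(v)$ is additionally weighted by the maximum number of hybrid nodes contained in a path from $v$ to $s$ (counting $v$ and $s$ themselves). $\theta_{AB}(N)=\{\theta_{AB}(e)\mid e\in E\}$. A phylogenetic network on $S$ (in this sense) is a rooted DAG labeled in $S$ such that: (1) every node has in-degree and out-degree in $\{0,1,2\}$ and no node has in-degree equal to its out-degree; (2) if a node has two children, at least one of them is a tree node; (3a) if $u_1,u_2$ are the parents of a hybrid node, there is no path $u_1\rightsquigarrow u_2$ nor $u_2\rightsquigarrow u_1$; (3b) if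 $u_1,u_2$ are the parents of a hybrid node $u$, $v_1,v_2$ are the parents of a hybrid node $v$, and there is a path $u_1\rightsquigarrow v_1$, then there is no path $v_2\rightsquigarrow u_1$ nor $v_2\rightsquigarrow u_2$. Such a network is of class I if every hybrid node has at least one parent that is a tree node. *)

theory Defs
  imports Main
begin

text \<open>A network is given by a node set V, an arc set E and a labelling lab
  of its nodes (only the values on leaves matter).\<close>

definition indeg :: "('v \<times> 'v) set \<Rightarrow> 'v \<Rightarrow> nat" where
  "indeg E v = card {u. (u, v) \<in> E}"

definition outdeg :: "('v \<times> 'v) set \<Rightarrow> 'v \<Rightarrow> nat" where
  "outdeg E v = card {w. (v, w) \<in> E}"

definition leaves :: "'v set \<Rightarrow> ('v \<times> 'v) set \<Rightarrow> 'v set" where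
  "leaves V E = {v \<in> V. outdeg E v = 0}"

definition roots :: "'v set \<Rightarrow> ('v \<times> 'v) set \<Rightarrow> 'v set" where
  "roots V E = {v \<in> V. indeg E v = 0}"

definition tree_node :: "('v \<times> 'v) set \<Rightarrow> 'v \<Rightarrow> bool" where
  "tree_node E v \<longleftrightarrow> indeg E v \<le> 1"

definition hybrid_node :: "('v \<times> 'v) set \<Rightarrow> 'v \<Rightarrow> bool" where
  "hybrid_node E v \<longleftrightarrow> indeg E v > 1"

definition paths :: "('v \<times> 'v) set \<Rightarrow> 'v \<Rightarrow> 'v \<Rightarrow> 'v list set" where
  "paths E u v = {xs. xs \<noteq> [] \<and> hd xs = u \<and> last xs = v \<and>
                      successively (\<lambda>a b. (a, b) \<in> E) xs}"

definition is_dag :: "'v set \<Rightarrow> ('v \<times> 'v) set \<Rightarrow> bool" where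
  "is_dag V E \<longleftrightarrow> finite V \<and> E \<subseteq> V \<times> V \<and> acyclic E"

definition rooted :: "'v set \<Rightarrow> ('v \<times> 'v) set \<Rightarrow> bool" where
  "rooted V E \<longleftrightarrow> (\<exists>!r. r \<in> roots V E)"

definition labeled_in :: "'v set \<Rightarrow> ('v \<times> 'v) set \<Rightarrow> ('v \<Rightarrow> 'l) \<Rightarrow> 'l set \<Rightarrow> bool" where
  "labeled_in V E lab S \<longleftrightarrow> bij_betw lab (leaves V E) S"

definition phylo_net :: "'v set \<Rightarrow> ('v \<times> 'v) set \<Rightarrow> ('v \<Rightarrow> 'l) \<Rightarrow> 'l set \<Rightarrow> bool" where
  "phylo_net V E lab S \<longleftrightarrow>
     is_dag V E \<and> rooted V E \<and> labeled_in V E lab S \<and>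
     \<comment> \<open>(1)\<close>
     (\<forall>v\<in>V. indeg E v \<in> {0,1,2} \<and> outdeg E v \<in> {0,1,2} \<and> indeg E v \<noteq> outdeg E v) \<and>
     \<comment> \<open>(2)\<close>
     (\<forall>v\<in>V. outdeg E v = 2 \<longrightarrow> (\<exists>c. (v, c) \<in> E \<and> tree_node E c)) \<and>
     \<comment> \<open>(3a)\<close>
     (\<forall>h u1 u2. hybrid_node E h \<and> (u1, h) \<in> E \<and> (u2, h) \<in> E \<and> u1 \<noteq> u2 \<longrightarrow>
         (u1, u2) \<notin> E\<^sup>* \<and> (u2, u1) \<notin> E\<^sup>*) \<and>
     \<comment> \<open>(3b)\<close>
     (\<forall>u u1 u2 v v1 v2. hybrid_node E u \<and> hybrid_node E v \<and> u \<noteq> v \<and>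
         (u1, u) \<in> E \<and> (u2, u) \<in> E \<and> u1 \<noteq> u2 \<and>
         (v1, v) \<in> E \<and> (v2, v) \<in> E \<and> v1 \<noteq> v2 \<and> (u1, v1) \<in> E\<^sup>* \<longrightarrow>
         (v2, u1) \<notin> E\<^sup>* \<and> (v2, u2) \<notin> E\<^sup>*)"

definition class_I :: "'v set \<Rightarrow> ('v \<times> 'v) set \<Rightarrow> bool" where
  "class_I V E \<longleftrightarrow>
     (\<forall>h\<in>V. hybrid_node E h \<longrightarrow> (\<exists>p. (p, h) \<in> E \<and> tree_node E p))"

definition net_iso :: "'v set \<Rightarrow> ('v \<times> 'v) set \<Rightarrow> ('v \<Rightarrow> 'l) \<Rightarrow>
                       'w set \<Rightarrow> ('w \<times> 'w) set \<Rightarrow> ('w \<Rightarrow> 'l) \<Rightarrow> bool" where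
  "net_iso V1 E1 l1 V2 E2 l2 \<longleftrightarrow>
     (\<exists>f. bij_betw f V1 V2 \<and>
          (\<forall>u\<in>V1. \<forall>v\<in>V1. (u, v) \<in> E1 \<longleftrightarrow> (f u, f v) \<in> E2) \<and>
          (\<forall>s\<in>leaves V1 E1. l2 (f s) = l1 s))"

definition Cset :: "'v set \<Rightarrow> ('v \<times> 'v) set \<Rightarrow> 'v \<Rightarrow> 'v set" where
  "Cset V E u = {s \<in> leaves V E. (u, s) \<in> E\<^sup>*}"

definition Aset :: "'v set \<Rightarrow> ('v \<times> 'v) set \<Rightarrow> 'v \<Rightarrow> 'v set" where
  "Aset V E u = {s \<in> Cset V E u. \<forall>r\<in>roots V E. \<forall>xs\<in>paths E r s. u \<in> set xs}"

definition Bset :: "'v set \<Rightarrow> ('v \<times> 'v) set \<Rightarrow> 'v \<Rightarrow> 'v set" where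
  "Bset V E u = Cset V E u - Aset V E u"

definition hyb_weight :: "('v \<times> 'v) set \<Rightarrow> 'v \<Rightarrow> 'v \<Rightarrow> nat" where
  "hyb_weight E v s = Max ((\<lambda>xs. length (filter (hybrid_node E) xs)) ` paths E v s)"

definition theta_arc :: "'v set \<Rightarrow> ('v \<times> 'v) set \<Rightarrow> ('v \<Rightarrow> 'l) \<Rightarrow> 'l set \<Rightarrow> 'v \<times> 'v
                         \<Rightarrow> ('l \<times> nat) set \<times> ('l \<times> nat) set \<times> 'l set" where
  "theta_arc V E lab S e = (case e of (u, v) \<Rightarrow>
     ((\<lambda>s. (lab s, hyb_weight E v s)) ` Aset V E v,
      (\<lambda>s. (lab s, hyb_weight E v s)) ` Bset V E v,
      S - lab ` Cset V E v))"

definition thetaAB :: "'v set \<Rightarrow> ('v \<times> 'v) set \<Rightarrow> ('v \<Rightarrow> 'l) \<Rightarrow> 'l set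
                       \<Rightarrow> (('l \<times> nat) set \<times> ('l \<times> nat) set \<times> 'l set) set" where
  "thetaAB V E lab S = theta_arc V E lab S ` E"

end

theory Submission
  imports Defs
begin

text \<open>The two networks below have fourteen nodes, root 6 and leaves 1, \<dots>, 5; both are
  of class I. Their AB-weighted tripartitions are compared by evaluation, after every notion of
  the definitions has been replaced by a finite one: degrees become cardinalities of images of
  the arc set, reachability a transitive closure computed once, and the path sets, which are
  infinite as sets of lists, enumerations of lists of bounded length (paths in an acyclic graph
  are simple). The networks are not isomorphic: in the second one the leaves 1 and 5 have a
  common grandparent (node 10, through 13 and 12), whereas in the first one the only
  grandparent of leaf 1 is the root, which is not a grandparent of leaf 5.\<close>

fun paths_from :: "('v \<times> 'v) list \<Rightarrow> nat \<Rightarrow> 'v \<Rightarrow> 'v list list" where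
  "paths_from es 0 u = [[u]]"
| "paths_from es (Suc n) u = [u] # [u # xs. (u', w) \<leftarrow> es, u' = u, xs \<leftarrow> paths_from es n w]"

lemma mem_paths_from:
  "xs \<in> set (paths_from es n u) \<longleftrightarrow>
     xs \<noteq> [] \<and> hd xs = u \<and> successively (\<lambda>a b. (a, b) \<in> set es) xs \<and> length xs \<le> Suc n"
proof (induction n arbitrary: u xs)
  case 0
  show ?case by (auto simp: le_Suc_eq length_Suc_conv)
next
  case (Suc n)
  show ?case
    using Suc.IH by (cases xs rule: remdups_adj.cases) (auto simp: successively_Cons image_iff)
qed

lemma successively_nth_trancl:
  assumes "successively (\<lambda>a b. (a, b) \<in> E) xs" "i < j" "j < length xs"
  shows "(xs ! i, xs ! j) \<in> E\<^sup>+"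
  using assms(2,3)
proof (induction j)
  case (Suc j)
  have "(xs ! j, xs ! Suc j) \<in> E"
    using assms(1) Suc.prems(2) by (simp add: successively_conv_nth)
  then show ?case
    using Suc by (cases "i = j") (auto intro: trancl_into_trancl)
qed simp

lemma acyclic_path_distinct:
  assumes "acyclic E" "xs \<in> paths E u v"
  shows "distinct xs"
proof -
  have "xs ! i \<noteq> xs ! j" if "i < j" "j < length xs" for i j
    using successively_nth_trancl[of E xs i j] that assms by (auto simp: paths_def acyclic_def)
  then show ?thesis
    by (metis distinct_conv_nth linorder_neq_iff)
qed

lemma acyclic_path_length:
  assumes "acyclic E" "finite E" "xs \<in> paths E u v"
  shows "length xs \<le> Suc (card E)"
proof -
  have "set (tl xs) \<subseteq> snd ` E"
  proof
    fix y assume "y \<in> set (tl xs)"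
    then obtain j where "j < length (tl xs)" "y = tl xs ! j"
      by (auto simp: in_set_conv_nth)
    then have "(xs ! j, y) \<in> E"
      using assms(3) by (auto simp: paths_def successively_conv_nth nth_tl)
    then show "y \<in> snd ` E" by force
  qed
  then have "length (tl xs) \<le> card E"
    using acyclic_path_distinct[OF assms(1,3)] assms(2)
    by (metis card_image_le distinct_card distinct_tl card_mono finite_imageI order.trans)
  then show ?thesis by simp
qed

lemma paths_eq_paths_from:
  assumes "acyclic (set es)"
  shows "paths (set es) u v = {xs \<in> set (paths_from es (length es) u). last xs = v}"
proof -
  have "length xs \<le> Suc (length es)" if "xs \<in> paths (set es) u v" for xs
    using acyclic_path_length[OF assms _ that] card_length[of es] by simp
  then show ?thesis
    by (auto simp: paths_def mem_paths_from)
qed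

lemma indeg_eq_card_Image: "indeg E v = card (E\<inverse> `` {v})"
  unfolding indeg_def by (rule arg_cong[where f = card]) blast

lemma outdeg_eq_card_Image: "outdeg E v = card (E `` {v})"
  unfolding outdeg_def by (rule arg_cong[where f = card]) blast

lemma ex1_mem_iff_card_eq_1: "(\<exists>!x. x \<in> A) \<longleftrightarrow> card A = 1"
proof -
  have "(\<exists>!x. x \<in> A) \<longleftrightarrow> (\<exists>x. A = {x})" by blast
  then show ?thesis by (simp add: card_1_singleton_iff)
qed

lemma hybrid_nodes_are_arc_heads: "{h. hybrid_node E h} = {h \<in> snd ` E. hybrid_node E h}"
proof -
  have "h \<in> snd ` E" if "hybrid_node E h" for h
  proof -
    from that have "{u. (u, h) \<in> E} \<noteq> {}"
      unfolding hybrid_node_def indeg_def by (metis card.empty not_less_zero)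
    then show ?thesis by force
  qed
  then show ?thesis by blast
qed

lemma phylo_net_iff_parents:
  assumes "is_dag V E"
  shows "phylo_net V E lab S \<longleftrightarrow>
     card (roots V E) = 1 \<and> bij_betw lab (leaves V E) S \<and>
     (\<forall>v\<in>V. indeg E v \<in> {0,1,2} \<and> outdeg E v \<in> {0,1,2} \<and> indeg E v \<noteq> outdeg E v) \<and>
     (\<forall>v\<in>V. outdeg E v = 2 \<longrightarrow> (\<exists>c\<in>E `` {v}. tree_node E c)) \<and>
     (\<forall>h\<in>{h \<in> snd ` E. hybrid_node E h}. \<forall>u1\<in>E\<inverse> `` {h}. \<forall>u2\<in>E\<inverse> `` {h}.
        u1 \<noteq> u2 \<longrightarrow> (u1, u2) \<notin> E\<^sup>* \<and> (u2, u1) \<notin> E\<^sup>*) \<and>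
     (\<forall>u\<in>{h \<in> snd ` E. hybrid_node E h}. \<forall>v\<in>{h \<in> snd ` E. hybrid_node E h}.
        \<forall>u1\<in>E\<inverse> `` {u}. \<forall>u2\<in>E\<inverse> `` {u}. \<forall>v1\<in>E\<inverse> `` {v}. \<forall>v2\<in>E\<inverse> `` {v}.
        u \<noteq> v \<and> u1 \<noteq> u2 \<and> v1 \<noteq> v2 \<and> (u1, v1) \<in> E\<^sup>* \<longrightarrow>
        (v2, u1) \<notin> E\<^sup>* \<and> (v2, u2) \<notin> E\<^sup>*)"
proof -
  have tree_child:
    "(\<forall>v\<in>V. outdeg E v = 2 \<longrightarrow> (\<exists>c. (v, c) \<in> E \<and> tree_node E c)) \<longleftrightarrow>
     (\<forall>v\<in>V. outdeg E v = 2 \<longrightarrow> (\<exists>c\<in>E `` {v}. tree_node E c))"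
    by blast
  have parents_incomparable:
    "(\<forall>h u1 u2. hybrid_node E h \<and> (u1, h) \<in> E \<and> (u2, h) \<in> E \<and> u1 \<noteq> u2 \<longrightarrow>
        (u1, u2) \<notin> E\<^sup>* \<and> (u2, u1) \<notin> E\<^sup>*) \<longleftrightarrow>
     (\<forall>h\<in>{h. hybrid_node E h}. \<forall>u1\<in>E\<inverse> `` {h}. \<forall>u2\<in>E\<inverse> `` {h}.
        u1 \<noteq> u2 \<longrightarrow> (u1, u2) \<notin> E\<^sup>* \<and> (u2, u1) \<notin> E\<^sup>*)"
    by blast
  have parents_of_two_hybrids:
    "(\<forall>u u1 u2 v v1 v2. hybrid_node E u \<and> hybrid_node E v \<and> u \<noteq> v \<and>
        (u1, u) \<in> E \<and> (u2, u) \<in> E \<and> u1 \<noteq> u2 \<and>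
        (v1, v) \<in> E \<and> (v2, v) \<in> E \<and> v1 \<noteq> v2 \<and> (u1, v1) \<in> E\<^sup>* \<longrightarrow>
        (v2, u1) \<notin> E\<^sup>* \<and> (v2, u2) \<notin> E\<^sup>*) \<longleftrightarrow>
     (\<forall>u\<in>{h. hybrid_node E h}. \<forall>v\<in>{h. hybrid_node E h}.
        \<forall>u1\<in>E\<inverse> `` {u}. \<forall>u2\<in>E\<inverse> `` {u}. \<forall>v1\<in>E\<inverse> `` {v}. \<forall>v2\<in>E\<inverse> `` {v}.
        u \<noteq> v \<and> u1 \<noteq> u2 \<and> v1 \<noteq> v2 \<and> (u1, v1) \<in> E\<^sup>* \<longrightarrow>
        (v2, u1) \<notin> E\<^sup>* \<and> (v2, u2) \<notin> E\<^sup>*)"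
    by blast
  show ?thesis
    using assms unfolding phylo_net_def rooted_def labeled_in_def ex1_mem_iff_card_eq_1
      tree_child parents_incomparable parents_of_two_hybrids hybrid_nodes_are_arc_heads
    by (simp only: simp_thms)
qed

lemma class_I_iff_parents:
  "class_I V E \<longleftrightarrow> (\<forall>h\<in>V. hybrid_node E h \<longrightarrow> (\<exists>p\<in>E\<inverse> `` {h}. tree_node E p))"
  by (auto simp: class_I_def)

definition N1_arcs :: "(nat \<times> nat) list" where
  "N1_arcs = [(6,7), (6,10), (7,12), (7,13), (10,1), (10,11), (12,2), (12,14), (13,8), (13,14),
               (8,3), (8,11), (11,9), (14,5), (9,4), (9,5)]"

definition N2_arcs :: "(nat \<times> nat) list" where
  "N2_arcs = [(6,7), (6,10), (7,8), (7,11), (10,12), (10,13), (11,2), (11,12), (13,1), (13,14),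
               (8,3), (8,14), (14,9), (12,5), (9,4), (9,5)]"

lemma trancl_N1_arcs: "(set N1_arcs)\<^sup>+ = set
  [(6,1), (6,2), (6,3), (6,4), (6,5), (6,7), (6,8), (6,9), (6,10), (6,11), (6,12), (6,13), (6,14),
   (7,2), (7,3), (7,4), (7,5), (7,8), (7,9), (7,11), (7,12), (7,13), (7,14),
   (8,3), (8,4), (8,5), (8,9), (8,11), (9,4), (9,5), (10,1), (10,4), (10,5), (10,9), (10,11),
   (11,4), (11,5), (11,9), (12,2), (12,5), (12,14), (13,3), (13,4), (13,5), (13,8), (13,9),
   (13,11), (13,14), (14,5)]"
  unfolding set_trancl_list[symmetric] by code_simp

lemma trancl_N2_arcs: "(set N2_arcs)\<^sup>+ = set
  [(6,1), (6,2), (6,3), (6,4), (6,5), (6,7), (6,8), (6,9), (6,10), (6,11), (6,12), (6,13), (6,14),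
   (7,2), (7,3), (7,4), (7,5), (7,8), (7,9), (7,11), (7,12), (7,14),
   (8,3), (8,4), (8,5), (8,9), (8,14), (9,4), (9,5), (10,1), (10,4), (10,5), (10,9), (10,12),
   (10,13), (10,14), (11,2), (11,5), (11,12), (12,5), (13,1), (13,4), (13,5), (13,9), (13,14),
   (14,4), (14,5), (14,9)]"
  unfolding set_trancl_list[symmetric] by code_simp

lemma acyclic_N1_arcs: "acyclic (set N1_arcs)"
  unfolding acyclic_irrefl trancl_N1_arcs by code_simp

lemma acyclic_N2_arcs: "acyclic (set N2_arcs)"
  unfolding acyclic_irrefl trancl_N2_arcs by code_simp

lemma is_dag_N1: "is_dag {1..14} (set N1_arcs)"
  using acyclic_N1_arcs by (simp add: is_dag_def N1_arcs_def)

lemma is_dag_N2: "is_dag {1..14} (set N2_arcs)"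
  using acyclic_N2_arcs by (simp add: is_dag_def N2_arcs_def)

(* Intervals and set comprehensions are first rewritten into sets of lists,
   which code_simp can evaluate. *)
lemma phylo_net_N1: "phylo_net {1..14} (set N1_arcs) id {1..5::nat}"
  unfolding phylo_net_iff_parents[OF is_dag_N1]
  by (simp only: roots_def leaves_def indeg_eq_card_Image outdeg_eq_card_Image
      tree_node_def[abs_def] hybrid_node_def[abs_def] rtrancl_eq_or_trancl trancl_N1_arcs
      atLeastAtMost_upt Set.filter_eq[symmetric]) code_simp

lemma phylo_net_N2: "phylo_net {1..14} (set N2_arcs) id {1..5::nat}"
  unfolding phylo_net_iff_parents[OF is_dag_N2]
  by (simp only: roots_def leaves_def indeg_eq_card_Image outdeg_eq_card_Image
      tree_node_def[abs_def] hybrid_node_def[abs_def] rtrancl_eq_or_trancl trancl_N2_arcs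
      atLeastAtMost_upt Set.filter_eq[symmetric]) code_simp

lemma class_I_N1: "class_I {1..14} (set N1_arcs)"
  unfolding class_I_iff_parents
  by (simp only: indeg_eq_card_Image tree_node_def[abs_def] hybrid_node_def[abs_def]
      atLeastAtMost_upt) code_simp

lemma class_I_N2: "class_I {1..14} (set N2_arcs)"
  unfolding class_I_iff_parents
  by (simp only: indeg_eq_card_Image tree_node_def[abs_def] hybrid_node_def[abs_def]
      atLeastAtMost_upt) code_simp

lemma thetaAB_N1_eq_N2:
  "thetaAB {1..14} (set N1_arcs) id {1..5::nat} = thetaAB {1..14} (set N2_arcs) id {1..5}"
  unfolding thetaAB_def theta_arc_def[abs_def] Aset_def Bset_def Cset_def hyb_weight_def
  by (simp only: paths_eq_paths_from[OF acyclic_N1_arcs] paths_eq_paths_from[OF acyclic_N2_arcs]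
      roots_def leaves_def indeg_eq_card_Image outdeg_eq_card_Image hybrid_node_def[abs_def]
      rtrancl_eq_or_trancl trancl_N1_arcs trancl_N2_arcs prod.case atLeastAtMost_upt
      Set.filter_eq[symmetric]) code_simp

lemma leaves_N1: "leaves {1..14} (set N1_arcs) = {1..5}"
  by (simp only: leaves_def outdeg_eq_card_Image atLeastAtMost_upt Set.filter_eq[symmetric])
    code_simp

lemma not_net_iso_N1_N2:
  "\<not> net_iso {1..14} (set N1_arcs) id {1..14} (set N2_arcs) (id :: nat \<Rightarrow> nat)"
proof
  assume "net_iso {1..14} (set N1_arcs) id {1..14} (set N2_arcs) (id :: nat \<Rightarrow> nat)"
  then obtain f where bij: "bij_betw f {1..14} {1..14::nat}"
    and arcs: "\<forall>u\<in>{1..14}. \<forall>v\<in>{1..14}. (u, v) \<in> set N1_arcs \<longleftrightarrow> (f u, f v) \<in> set N2_arcs"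
    and fixes_leaves: "\<forall>s\<in>{1..5}. f s = s"
    unfolding net_iso_def leaves_N1 by auto
  have preimage: "\<exists>x\<in>{1..14}. f x = y" if "y \<in> {1..14}" for y
    using bij_betw_imp_surj_on[OF bij] that by (metis imageE)
  obtain g where "g \<in> {1..14}" "f g = 10" using preimage[of 10] by auto
  moreover obtain a where "a \<in> {1..14}" "f a = 13" using preimage[of 13] by auto
  moreover obtain b where "b \<in> {1..14}" "f b = 12" using preimage[of 12] by auto
  moreover have "f 1 = 1" "f 5 = 5"
    using fixes_leaves by simp_all
  ultimately have "(g, a) \<in> set N1_arcs" "(a, 1) \<in> set N1_arcs"
    and "(g, b) \<in> set N1_arcs" "(b, 5) \<in> set N1_arcs"
    using arcs by (auto simp: N2_arcs_def)
  then show False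
    by (auto simp: N1_arcs_def)
qed

theorem mainTheorem1:
  shows "\<exists>(V1 :: nat set) E1 (l1 :: nat \<Rightarrow> nat) (V2 :: nat set) E2 (l2 :: nat \<Rightarrow> nat).
     phylo_net V1 E1 l1 {1..5} \<and> class_I V1 E1 \<and>
     phylo_net V2 E2 l2 {1..5} \<and> class_I V2 E2 \<and>
     \<not> net_iso V1 E1 l1 V2 E2 l2 \<and>
     thetaAB V1 E1 l1 {1..5} = thetaAB V2 E2 l2 {1..5}"
  using phylo_net_N1 class_I_N1 phylo_net_N2 class_I_N2 not_net_iso_N1_N2 thetaAB_N1_eq_N2
  by blast

end
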